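(* Let $d\ge 1$ and $2\le n_1\le n_2\le\cdots\le n_d$ be integers, and let $G=K_{n_1}\times K_{n_2}\times\cdots\times K_{n_d}$. Then $\sigma_T(G)\le 2d-1$ if $n_1=2$, and $\sigma_T(G)\le 2d$ if $n_1\ge 3$.
   Context: $K_n$ is the complete graph on $n$ vertices and $\times$ is the Cartesian product of graphs. Thus $G$ has vertex set $\{(x_1,\dots,x_d): x_i\in\{0,1,\dots,n_i-1\}\}$, two vertices being adjacent iff they differ in exactly one coordinate (a Hamming graph). For a spanning tree $T$ of a connected graph $G$, $d_T(u,v)$ is the distance between $u$ and $v$ in $T$, $\sigma_T(G,T):=\max_{uv\in E(G)} d_T(u,v)$, and the tree-stretch is $\sigma_T(G):=\min\{\sigma_T(G,T): T \text{ a spanning tree of } G\}$. *)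

theory Defs
  imports Main
begin

text \<open>Simple graphs are given by a vertex set V and a set E of 2-element subsets of V.\<close>

definition walk :: "'a set \<Rightarrow> 'a set set \<Rightarrow> 'a list \<Rightarrow> bool" where
  "walk V E p \<longleftrightarrow> p \<noteq> [] \<and> set p \<subseteq> V \<and>
     (\<forall>i. Suc i < length p \<longrightarrow> {p ! i, p ! Suc i} \<in> E)"

definition connected_graph :: "'a set \<Rightarrow> 'a set set \<Rightarrow> bool" where
  "connected_graph V E \<longleftrightarrow>
     (\<forall>u\<in>V. \<forall>v\<in>V. \<exists>p. walk V E p \<and> hd p = u \<and> last p = v)"

definition is_cycle :: "'a set \<Rightarrow> 'a set set \<Rightarrow> 'a list \<Rightarrow> bool" where
  "is_cycle V E c \<longleftrightarrow> walk V E c \<and> length c \<ge> 3 \<and> distinct c \<and> {last c, hd c} \<in> E"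

definition acyclic_graph :: "'a set \<Rightarrow> 'a set set \<Rightarrow> bool" where
  "acyclic_graph V E \<longleftrightarrow> \<not> (\<exists>c. is_cycle V E c)"

definition is_tree :: "'a set \<Rightarrow> 'a set set \<Rightarrow> bool" where
  "is_tree V E \<longleftrightarrow> connected_graph V E \<and> acyclic_graph V E"

definition spanning_tree :: "'a set \<Rightarrow> 'a set set \<Rightarrow> 'a set set \<Rightarrow> bool" where
  "spanning_tree V E T \<longleftrightarrow> T \<subseteq> E \<and> is_tree V T"

definition gdist :: "'a set \<Rightarrow> 'a set set \<Rightarrow> 'a \<Rightarrow> 'a \<Rightarrow> nat" where
  "gdist V E u v = (LEAST k. \<exists>p. walk V E p \<and> hd p = u \<and> last p = v \<and> length p = Suc k)"

definition stretch :: "'a set \<Rightarrow> 'a set set \<Rightarrow> 'a set set \<Rightarrow> nat" where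
  "stretch V E T = Max {gdist V T u v | u v. {u, v} \<in> E}"

definition tree_stretch :: "'a set \<Rightarrow> 'a set set \<Rightarrow> nat" where
  "tree_stretch V E = Min {stretch V E T | T. spanning_tree V E T}"

text \<open>Hamming graph K_{n_1} x ... x K_{n_d}; ns = [n_1,...,n_d].\<close>
definition hamming_V :: "nat list \<Rightarrow> nat list set" where
  "hamming_V ns = {xs. length xs = length ns \<and> (\<forall>i<length ns. xs ! i < ns ! i)}"

definition hamming_E :: "nat list \<Rightarrow> nat list set set" where
  "hamming_E ns = {{x, y} | x y. x \<in> hamming_V ns \<and> y \<in> hamming_V ns \<and>
      card {i. i < length ns \<and> x ! i \<noteq> y ! i} = 1}"

end

theory Submission
  imports Defs
begin

text \<open>
  Root the tree at the zero vector and let the parent of a nonzero vertex be obtained by zeroing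
  its last nonzero coordinate, so the ancestors of \<open>x\<close> are its truncations \<open>trunc j x\<close> (first \<open>j\<close>
  coordinates kept, the rest zeroed). Vertices \<open>u\<close>, \<open>v\<close> differing only in coordinate \<open>i\<close> share the
  ancestor \<open>trunc i u = trunc i v\<close>, at most \<open>d - i\<close> levels above each; if \<open>u\<^sub>i = 0\<close> (or \<open>v\<^sub>i = 0\<close>)
  then \<open>trunc (i + 1) u\<close> is already that ancestor, which saves one step. Hence \<open>d\<^sub>T(u, v) \<le> 2d\<close>, and
  \<open>d\<^sub>T(u, v) \<le> 2d - 1\<close> unless \<open>i = 0\<close> and \<open>u\<^sub>0, v\<^sub>0\<close> are both nonzero, impossible when \<open>n\<^sub>1 = 2\<close>.
\<close>

lemma walk_Cons:
  "walk V T (x # p) \<longleftrightarrow> x \<in> V \<and> walk V T p \<and> {x, hd p} \<in> T \<or> x \<in> V \<and> p = []"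
  unfolding walk_def
  by (cases p) (auto simp: nth_Cons split: nat.splits)

lemma walk_if_successively_eq_or_edge:
  assumes "q \<noteq> []" "set q \<subseteq> V" "successively (\<lambda>a b. a = b \<or> {a, b} \<in> T) q"
  shows "\<exists>p. walk V T p \<and> hd p = hd q \<and> last p = last q \<and> length p \<le> length q"
  using assms
proof (induction q rule: induct_list012)
  case 1
  then show ?case by simp
next
  case (2 x)
  then show ?case by (intro exI[of _ "[x]"]) (simp add: walk_def)
next
  case (3 x y zs)
  then obtain p where p: "walk V T p" "hd p = y" "last p = last (y # zs)" "length p \<le> length (y # zs)"
    by auto
  have "p \<noteq> []" using p(1) by (simp add: walk_def)
  show ?case
  proof (cases "x = y")
    case True
    with p show ?thesis by (intro exI[of _ p]) simp
  next
    case False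
    with "3.prems" p have "walk V T (x # p)" by (simp add: walk_Cons)
    with p \<open>p \<noteq> []\<close> show ?thesis by (intro exI[of _ "x # p"]) simp
  qed
qed

lemma gdist_le_walk:
  assumes "walk V T p" "hd p = u" "last p = v"
  shows "gdist V T u v \<le> length p - 1"
proof -
  have "length p = Suc (length p - 1)" using assms(1) by (simp add: walk_def)
  with assms have "\<exists>q. walk V T q \<and> hd q = u \<and> last q = v \<and> length q = Suc (length p - 1)"
    by metis
  then show ?thesis unfolding gdist_def by (rule Least_le)
qed

text \<open>At a vertex of maximal rank on a cycle, both cycle neighbours would be its \<open>P\<close>-predecessors.\<close>
lemma acyclic_graph_if_rank_orientation:
  fixes rk :: "'a \<Rightarrow> nat"
  assumes orient: "\<And>e. e \<in> T \<Longrightarrow> \<exists>a b. e = {a, b} \<and> P a b"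
    and rank: "\<And>a b. P a b \<Longrightarrow> rk a < rk b"
    and unique: "\<And>a1 a2 b. P a1 b \<Longrightarrow> P a2 b \<Longrightarrow> a1 = a2"
  shows "acyclic_graph V T"
  unfolding acyclic_graph_def
proof
  have oriented_down: "P y x" if xy: "{x, y} \<in> T" and le: "rk y \<le> rk x" for x y
  proof -
    obtain a b where "{x, y} = {a, b}" "P a b" using orient[OF xy] by blast
    with rank[of a b] le show ?thesis by (auto simp: doubleton_eq_iff)
  qed
  assume "\<exists>c. is_cycle V T c"
  then obtain c where c: "walk V T c" "length c \<ge> 3" "distinct c" "{last c, hd c} \<in> T"
    by (auto simp: is_cycle_def)
  define L where "L = length c"
  define next_ix where "next_ix j = (if Suc j < L then Suc j else 0)" for j
  have cycle_edge: "{c ! j, c ! next_ix j} \<in> T" if "j < L" for j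
  proof (cases "Suc j < L")
    case True
    then show ?thesis using c(1) by (simp add: walk_def next_ix_def L_def)
  next
    case False
    with that have "j = L - 1" by simp
    moreover have "c \<noteq> []" using c(2) by auto
    ultimately show ?thesis using False c(4) by (simp add: L_def next_ix_def last_conv_nth hd_conv_nth)
  qed
  have "c \<noteq> []" using c(2) by auto
  then have "Max (rk ` set c) \<in> rk ` set c" by simp
  then obtain j where "j < L" "rk (c ! j) = Max (rk ` set c)"
    by (auto simp: L_def in_set_conv_nth)
  then have j: "j < L" "\<And>k. k < L \<Longrightarrow> rk (c ! k) \<le> rk (c ! j)"
    by (auto simp: L_def)
  define prev where "prev = (if j = 0 then L - 1 else j - 1)"
  have prev: "prev < L" "next_ix prev = j" "next_ix j < L" "next_ix j \<noteq> prev"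
    using c(2) j(1) by (auto simp: prev_def next_ix_def L_def)
  have "{c ! j, c ! prev} \<in> T" using cycle_edge[OF prev(1)] prev(2) by (simp add: insert_commute)
  then have "c ! next_ix j = c ! prev"
    using unique oriented_down cycle_edge j prev by metis
  with c(3) prev show False by (simp add: nth_eq_iff_index_eq L_def)
qed

lemma tree_stretch_le:
  assumes "finite V" "\<Union>E \<subseteq> V" "{u\<^sub>0, v\<^sub>0} \<in> E" "spanning_tree V E T"
    and "\<And>u v. {u, v} \<in> E \<Longrightarrow> gdist V T u v \<le> b"
  shows "tree_stretch V E \<le> b"
proof -
  define S where "S = {gdist V T u v | u v. {u, v} \<in> E}"
  have "S \<subseteq> (\<lambda>(u, v). gdist V T u v) ` (V \<times> V)"
  proof
    fix s assume "s \<in> S"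
    then obtain u v where "s = gdist V T u v" "{u, v} \<in> E" unfolding S_def by blast
    moreover from this(2) have "u \<in> V" "v \<in> V" using assms(2) by blast+
    ultimately show "s \<in> (\<lambda>(u, v). gdist V T u v) ` (V \<times> V)" by force
  qed
  moreover have "finite ((\<lambda>(u, v). gdist V T u v) ` (V \<times> V))" using assms(1) by simp
  ultimately have "finite S" by (rule finite_subset)
  moreover have "S \<noteq> {}" using assms(3) unfolding S_def by blast
  moreover have "\<forall>s\<in>S. s \<le> b" using assms(5) unfolding S_def by blast
  ultimately have "stretch V E T \<le> b" unfolding stretch_def S_def[symmetric] by simp
  moreover have "finite {stretch V E T' | T'. spanning_tree V E T'}"
  proof (rule finite_subset)
    show "{stretch V E T' | T'. spanning_tree V E T'} \<subseteq> stretch V E ` Pow E"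
      unfolding spanning_tree_def by blast
    have "E \<subseteq> Pow V" using assms(2) by blast
    then show "finite (stretch V E ` Pow E)" using assms(1) by (simp add: finite_subset)
  qed
  then have "tree_stretch V E \<le> stretch V E T"
    unfolding tree_stretch_def using assms(4) by (auto intro: Min_le)
  ultimately show ?thesis by simp
qed

lemma finite_hamming_V: "finite (hamming_V ns)"
proof (rule finite_subset)
  show "hamming_V ns \<subseteq> {xs. set xs \<subseteq> {..<sum_list ns} \<and> length xs = length ns}"
    by (auto simp: hamming_V_def in_set_conv_nth) (metis elem_le_sum_list order_less_le_trans)
qed (rule finite_lists_length_eq, simp)

lemma hamming_E_memD:
  assumes "{u, v} \<in> hamming_E ns"
  shows "u \<in> hamming_V ns" "v \<in> hamming_V ns" "card {i. i < length ns \<and> u ! i \<noteq> v ! i} = 1"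
proof -
  obtain x y where xy: "{u, v} = {x, y}" "x \<in> hamming_V ns" "y \<in> hamming_V ns"
    "card {i. i < length ns \<and> x ! i \<noteq> y ! i} = 1"
    using assms unfolding hamming_E_def by blast
  have "{i. i < length ns \<and> y ! i \<noteq> x ! i} = {i. i < length ns \<and> x ! i \<noteq> y ! i}" by auto
  moreover have "u = x \<and> v = y \<or> u = y \<and> v = x" using xy(1) by (simp add: doubleton_eq_iff)
  ultimately show "u \<in> hamming_V ns" "v \<in> hamming_V ns" "card {i. i < length ns \<and> u ! i \<noteq> v ! i} = 1"
    using xy(2-4) by (elim disjE conjE; simp)+
qed

definition trunc :: "nat \<Rightarrow> nat list \<Rightarrow> nat list" where
  "trunc j x = map (\<lambda>k. if k < j then x ! k else 0) [0..<length x]"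

lemma length_trunc [simp]: "length (trunc j x) = length x"
  by (simp add: trunc_def)

lemma nth_trunc [simp]: "k < length x \<Longrightarrow> trunc j x ! k = (if k < j then x ! k else 0)"
  by (simp add: trunc_def)

lemma trunc_length: "length x \<le> j \<Longrightarrow> trunc j x = x"
  by (intro nth_equalityI) auto

lemma trunc_trunc: "trunc j (trunc k x) = trunc (min j k) x"
  by (intro nth_equalityI) auto

lemma trunc_eqI: "length x = length y \<Longrightarrow> (\<And>k. k < j \<Longrightarrow> x ! k = y ! k) \<Longrightarrow> trunc j x = trunc j y"
  by (intro nth_equalityI) auto

lemma trunc_Suc_if_zero: "x ! j = 0 \<Longrightarrow> trunc (Suc j) x = trunc j x"
  by (intro nth_equalityI) (auto simp: less_Suc_eq)

lemma trunc_in_hamming_V: "x \<in> hamming_V ns \<Longrightarrow> trunc j x \<in> hamming_V ns"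
  by (auto simp: hamming_V_def intro: le_less_trans)

definition hamming_tree :: "nat list \<Rightarrow> nat list set set" where
  "hamming_tree ns = {{trunc j x, trunc (Suc j) x} | x j.
      x \<in> hamming_V ns \<and> j < length ns \<and> x ! j \<noteq> 0}"

lemma hamming_tree_subset_hamming_E: "hamming_tree ns \<subseteq> hamming_E ns"
proof
  fix e assume "e \<in> hamming_tree ns"
  then obtain x j where e: "e = {trunc j x, trunc (Suc j) x}"
    and x: "x \<in> hamming_V ns" and j: "j < length ns" "x ! j \<noteq> 0"
    unfolding hamming_tree_def by blast
  have "length x = length ns" using x by (simp add: hamming_V_def)
  with j have "{i. i < length ns \<and> trunc j x ! i \<noteq> trunc (Suc j) x ! i} = {j}"
    by (auto simp: less_Suc_eq split: if_splits)
  moreover have "trunc j x \<in> hamming_V ns" "trunc (Suc j) x \<in> hamming_V ns"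
    using x by (simp_all add: trunc_in_hamming_V)
  ultimately show "e \<in> hamming_E ns"
    unfolding e hamming_E_def by (intro CollectI exI[of _ "trunc j x"] exI[of _ "trunc (Suc j) x"]) simp
qed

text \<open>Each tree edge is oriented from \<open>a\<close> to \<open>b\<close>, where \<open>a\<close> arises from \<open>b\<close> by zeroing its last
  nonzero coordinate; the coordinate sum serves as rank.\<close>
lemma acyclic_hamming_tree: "acyclic_graph (hamming_V ns) (hamming_tree ns)"
proof (rule acyclic_graph_if_rank_orientation[where rk = sum_list])
  define last_nonzero where "last_nonzero b j \<longleftrightarrow>
      j < length b \<and> b ! j \<noteq> 0 \<and> (\<forall>k. j < k \<and> k < length b \<longrightarrow> b ! k = 0)" for b :: "nat list" and j
  define P where "P a b \<longleftrightarrow> (\<exists>j. last_nonzero b j \<and> a = trunc j b)" for a b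
  show "\<exists>a b. e = {a, b} \<and> P a b" if e_in: "e \<in> hamming_tree ns" for e
  proof -
    obtain x j where e: "e = {trunc j x, trunc (Suc j) x}"
      and x: "x \<in> hamming_V ns" and j: "j < length ns" "x ! j \<noteq> 0"
      using e_in unfolding hamming_tree_def by blast
    have "length x = length ns" using x by (simp add: hamming_V_def)
    with j have "last_nonzero (trunc (Suc j) x) j" by (simp add: last_nonzero_def)
    moreover have "trunc j x = trunc j (trunc (Suc j) x)" by (simp add: trunc_trunc)
    ultimately show ?thesis unfolding e P_def by blast
  qed
  show "sum_list a < sum_list b" if "P a b" for a b
  proof -
    obtain j where j: "last_nonzero b j" and a: "a = trunc j b"
      using \<open>P a b\<close> unfolding P_def by blast
    have "b = a[j := b ! j]"
      using j unfolding a last_nonzero_def by (intro nth_equalityI) (auto simp: nth_list_update)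
    then have "sum_list b = sum_list a + b ! j"
      using j sum_list_update[of j a "b ! j"] by (simp add: a last_nonzero_def)
    then show ?thesis using j by (simp add: last_nonzero_def)
  qed
  show "a1 = a2" if parents: "P a1 b" "P a2 b" for a1 a2 b
  proof -
    obtain j1 j2 where "last_nonzero b j1" "a1 = trunc j1 b" "last_nonzero b j2" "a2 = trunc j2 b"
      using parents unfolding P_def by blast
    moreover from this(1,3) have "j1 = j2"
      unfolding last_nonzero_def by (metis linorder_neqE_nat)
    ultimately show ?thesis by simp
  qed
qed

lemma trunc_Suc_eq_or_hamming_tree:
  assumes "x \<in> hamming_V ns" "j < length ns"
  shows "trunc j x = trunc (Suc j) x \<or> {trunc j x, trunc (Suc j) x} \<in> hamming_tree ns"
  using assms trunc_Suc_if_zero[of x j] unfolding hamming_tree_def by auto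

lemma successively_trunc:
  assumes "x \<in> hamming_V ns"
  shows "successively (\<lambda>a b. a = b \<or> {a, b} \<in> hamming_tree ns)
           (map (\<lambda>l. trunc l x) [m..<Suc (length ns)])"
  unfolding successively_map successively_conv_nth
  using trunc_Suc_eq_or_hamming_tree[OF assms] by (auto simp del: upt_Suc)

lemma hamming_tree_walk:
  assumes u: "u \<in> hamming_V ns" and v: "v \<in> hamming_V ns"
    and jk: "j \<le> length ns" "k \<le> length ns" and meet: "trunc j u = trunc k v"
  shows "\<exists>p. walk (hamming_V ns) (hamming_tree ns) p \<and> hd p = u \<and> last p = v
           \<and> length p \<le> Suc ((length ns - j) + (length ns - k))"
proof -
  let ?R = "\<lambda>a b. a = b \<or> {a, b} \<in> hamming_tree ns"
  define d where "d = length ns"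
  have lu: "length u = d" and lv: "length v = d" using u v by (simp_all add: hamming_V_def d_def)
  define A where "A = rev (map (\<lambda>l. trunc l u) [j..<Suc d])"
  define B where "B = map (\<lambda>l. trunc l v) [Suc k..<Suc d]"
  have "A \<noteq> []" "hd A = u" "last A = trunc j u"
    using jk trunc_length[of u d] lu
    by (simp_all del: upt_Suc add: A_def d_def hd_rev last_rev last_map hd_map)
  have "successively ?R A"
    using successively_trunc[OF u, of j] unfolding A_def d_def successively_rev
    by (simp add: insert_commute eq_commute)
  moreover have "successively ?R B"
    using successively_trunc[OF v, of "Suc k"] by (simp add: B_def d_def)
  moreover have "B = [] \<or> ?R (last A) (hd B)"
  proof (cases "k < d")
    case True
    then have "hd B = trunc (Suc k) v" by (simp del: upt_Suc add: B_def hd_map)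
    then show ?thesis
      using trunc_Suc_eq_or_hamming_tree[OF v, of k] True meet \<open>last A = trunc j u\<close>
      by (auto simp: d_def)
  next
    case False
    then show ?thesis by (simp add: B_def)
  qed
  ultimately have "successively ?R (A @ B)" by (simp add: successively_append_iff)
  moreover have "set (A @ B) \<subseteq> hamming_V ns"
    using trunc_in_hamming_V[OF u] trunc_in_hamming_V[OF v] by (auto simp: A_def B_def)
  moreover have "hd (A @ B) = u" using \<open>A \<noteq> []\<close> \<open>hd A = u\<close> by simp
  moreover have "last (A @ B) = v"
  proof (cases "k = d")
    case True
    then show ?thesis using \<open>last A = trunc j u\<close> meet trunc_length[of v d] lv by (simp add: B_def)
  next
    case False
    then show ?thesis using jk trunc_length[of v d] lv by (simp add: B_def d_def last_map)
  qed
  moreover have "length (A @ B) = Suc ((d - j) + (d - k))"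
    using jk by (simp add: A_def B_def d_def) arith
  moreover have "A @ B \<noteq> []" using \<open>A \<noteq> []\<close> by simp
  ultimately show ?thesis
    using walk_if_successively_eq_or_edge[of "A @ B" "hamming_V ns" "hamming_tree ns"]
    unfolding d_def by auto
qed

lemma connected_hamming_tree: "connected_graph (hamming_V ns) (hamming_tree ns)"
  unfolding connected_graph_def
proof (intro ballI)
  fix u v assume u: "u \<in> hamming_V ns" and v: "v \<in> hamming_V ns"
  then have "trunc 0 u = trunc 0 v" by (intro trunc_eqI) (simp_all add: hamming_V_def)
  with u v show "\<exists>p. walk (hamming_V ns) (hamming_tree ns) p \<and> hd p = u \<and> last p = v"
    using hamming_tree_walk[of u ns v 0 0] by blast
qed

lemma spanning_tree_hamming_tree: "spanning_tree (hamming_V ns) (hamming_E ns) (hamming_tree ns)"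
  unfolding spanning_tree_def is_tree_def
  using hamming_tree_subset_hamming_E connected_hamming_tree acyclic_hamming_tree by blast

lemma gdist_hamming_tree_le:
  assumes "u \<in> hamming_V ns" "v \<in> hamming_V ns" "j \<le> length ns" "k \<le> length ns"
    and "trunc j u = trunc k v"
  shows "gdist (hamming_V ns) (hamming_tree ns) u v \<le> (length ns - j) + (length ns - k)"
  using hamming_tree_walk[OF assms] gdist_le_walk by fastforce

lemma gdist_hamming_tree_edge_le:
  assumes "{u, v} \<in> hamming_E ns"
  shows "gdist (hamming_V ns) (hamming_tree ns) u v
           \<le> (if ns ! 0 = 2 then 2 * length ns - 1 else 2 * length ns)"
proof -
  define d where "d = length ns"
  have u: "u \<in> hamming_V ns" and v: "v \<in> hamming_V ns"
    and "card {i. i < d \<and> u ! i \<noteq> v ! i} = 1"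
    using hamming_E_memD[OF assms] by (simp_all add: d_def)
  then obtain i where i: "{i. i < d \<and> u ! i \<noteq> v ! i} = {i}" by (meson card_1_singletonE)
  then have "i < d" "u ! i \<noteq> v ! i" by auto
  have "trunc i u = trunc i v"
  proof (rule trunc_eqI)
    show "length u = length v" using u v by (simp add: hamming_V_def)
    fix k assume "k < i"
    with i \<open>i < d\<close> show "u ! k = v ! k"
      by (metis (mono_tags) less_trans mem_Collect_eq nat_neq_iff singletonD)
  qed
  let ?g = "gdist (hamming_V ns) (hamming_tree ns) u v"
  consider "u ! i = 0" | "v ! i = 0" | "u ! i \<noteq> 0" "v ! i \<noteq> 0" by blast
  then show ?thesis
  proof cases
    case 1
    then have "trunc (Suc i) u = trunc i v" by (simp add: trunc_Suc_if_zero \<open>trunc i u = trunc i v\<close>)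
    then have "?g \<le> (d - Suc i) + (d - i)"
      using gdist_hamming_tree_le[OF u v, of "Suc i" i] \<open>i < d\<close> by (simp add: d_def)
    with \<open>i < d\<close> have "?g \<le> 2 * d - 1" by arith
    then show ?thesis unfolding d_def[symmetric] by auto
  next
    case 2
    then have "trunc i u = trunc (Suc i) v" by (simp add: trunc_Suc_if_zero \<open>trunc i u = trunc i v\<close>)
    then have "?g \<le> (d - i) + (d - Suc i)"
      using gdist_hamming_tree_le[OF u v, of i "Suc i"] \<open>i < d\<close> by (simp add: d_def)
    with \<open>i < d\<close> have "?g \<le> 2 * d - 1" by arith
    then show ?thesis unfolding d_def[symmetric] by auto
  next
    case 3
    have "?g \<le> (d - i) + (d - i)"
      using gdist_hamming_tree_le[OF u v, of i i] \<open>i < d\<close> \<open>trunc i u = trunc i v\<close>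
      by (simp add: d_def)
    moreover have "ns ! 0 \<noteq> 2" if "i = 0"
    proof
      assume "ns ! 0 = 2"
      then have "u ! 0 < 2" "v ! 0 < 2" using u v \<open>i < d\<close> that by (auto simp: hamming_V_def d_def)
      with 3 \<open>u ! i \<noteq> v ! i\<close> that show False by simp
    qed
    ultimately show ?thesis using \<open>i < d\<close> unfolding d_def[symmetric] by (cases "i = 0") auto
  qed
qed

lemma zero_edge_in_hamming_E:
  assumes "ns \<noteq> []" "\<forall>i<length ns. 2 \<le> ns ! i"
  shows "{replicate (length ns) 0, (replicate (length ns) 0)[0 := 1]} \<in> hamming_E ns"
proof -
  let ?z = "replicate (length ns) (0::nat)"
  have "?z \<in> hamming_V ns" "?z[0 := 1] \<in> hamming_V ns"
    using assms by (auto simp: hamming_V_def nth_list_update)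
  moreover have "{i. i < length ns \<and> ?z ! i \<noteq> ?z[0 := 1] ! i} = {0}"
    using assms(1) by (auto simp: nth_list_update)
  ultimately show ?thesis
    unfolding hamming_E_def by (intro CollectI exI[of _ ?z] exI[of _ "?z[0 := 1]"]) simp
qed

theorem lemma3p1:
  fixes ns :: "nat list" and d :: nat
  assumes "length ns = d" and "d \<ge> 1"
    and "sorted ns" and "\<forall>i<d. 2 \<le> ns ! i"
  shows "(ns ! 0 = 2 \<longrightarrow> tree_stretch (hamming_V ns) (hamming_E ns) \<le> 2 * d - 1)
       \<and> (ns ! 0 \<ge> 3 \<longrightarrow> tree_stretch (hamming_V ns) (hamming_E ns) \<le> 2 * d)"
proof -
  have "tree_stretch (hamming_V ns) (hamming_E ns) \<le> (if ns ! 0 = 2 then 2 * d - 1 else 2 * d)"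
  proof (rule tree_stretch_le[OF finite_hamming_V _ _ spanning_tree_hamming_tree])
    show "\<Union> (hamming_E ns) \<subseteq> hamming_V ns" unfolding hamming_E_def by blast
    show "{replicate d 0, (replicate d 0)[0 := 1]} \<in> hamming_E ns"
    proof -
      have "ns \<noteq> []" using assms(1,2) by auto
      then show ?thesis using zero_edge_in_hamming_E[of ns] assms(1,4) by simp
    qed
    show "gdist (hamming_V ns) (hamming_tree ns) u v \<le> (if ns ! 0 = 2 then 2 * d - 1 else 2 * d)"
      if "{u, v} \<in> hamming_E ns" for u v
      using gdist_hamming_tree_edge_le[OF that] unfolding assms(1) .
  qed
  then show ?thesis by auto
qed

end
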